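(* Let $1\gg p\gg q\gg\mu\gg n^{-1}$. Let $G$ be a graph with $n$ vertices and $e(G)\ge pn^2$. Then $G$ has a $q$-cut-dense subgraph of order $\mu n$.
   Context: A graph $F$ is $q$-cut-dense if for every partition $V(F)=A\cup B$ into disjoint sets, the number of edges of $F$ between $A$ and $B$ is at least $q|A||B|$. The hierarchy means: $p$ is sufficiently small; given $p$, $q$ is sufficiently small; given $q$, $\mu$ is sufficiently small; given $\mu$, $n$ is sufficiently large. *)

theory Defs
  imports Complex_Main
begin

definition simple_graph :: "'a set \<Rightarrow> 'a set set \<Rightarrow> bool" where
  "simple_graph V E \<longleftrightarrow> finite V \<and> (\<forall>e\<in>E. e \<subseteq> V \<and> card e = 2)"

definition subgraph :: "'a set \<Rightarrow> 'a set set \<Rightarrow> 'a set \<Rightarrow> 'a set set \<Rightarrow> bool" where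
  "subgraph W D V E \<longleftrightarrow> simple_graph W D \<and> W \<subseteq> V \<and> D \<subseteq> E"

definition cross_edges :: "'a set set \<Rightarrow> 'a set \<Rightarrow> 'a set \<Rightarrow> 'a set set" where
  "cross_edges E A B = {e \<in> E. \<exists>a\<in>A. \<exists>b\<in>B. e = {a, b}}"

definition cut_dense :: "real \<Rightarrow> 'a set \<Rightarrow> 'a set set \<Rightarrow> bool" where
  "cut_dense q V E \<longleftrightarrow>
     (\<forall>A B. A \<union> B = V \<longrightarrow> A \<inter> B = {} \<longrightarrow>
        real (card (cross_edges E A B)) \<ge> q * real (card A) * real (card B))"

end

theory Submission
  imports Defs
begin

text \<open>If a graph is not q-cut-dense, split it along a sparse cut A, B.  Since
  \<open>f(k) = \<alpha>k\<^sup>2 + \<beta>k\<close> satisfies \<open>f(a + b) \<ge> f(a) + f(b) + 2\<alpha>ab\<close> and fewer than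
  \<open>q|A||B| \<le> 2\<alpha>|A||B|\<close> edges cross the cut, one side X still has more than \<open>f(|X|)\<close>
  edges.  Iterating, we reach a q-cut-dense subgraph W with more than
  \<open>\<alpha>|W|\<^sup>2 + \<beta>|W|\<close> edges; as it has at most \<open>|W|\<^sup>2\<close> edges, \<open>|W| > \<beta>\<close>.  With
  \<open>\<alpha> = p/2\<close> and \<open>\<beta> = pn/4\<close> this gives the theorem for all \<open>q \<le> p\<close> and \<open>\<mu> \<le> p/4\<close>.\<close>

definition induced_edges :: "'a set set \<Rightarrow> 'a set \<Rightarrow> 'a set set" where
  "induced_edges E A = {e \<in> E. e \<subseteq> A}"

lemma card_edges_le_square:
  assumes "simple_graph V E"
  shows "card E \<le> card V ^ 2"
proof -
  have finV: "finite V" using assms by (simp add: simple_graph_def)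
  have "E \<subseteq> {e. e \<subseteq> V \<and> card e = 2}" using assms by (auto simp: simple_graph_def)
  from card_mono[OF _ this] have "card E \<le> card V choose 2"
    using finV by (simp add: n_subsets)
  also have "\<dots> \<le> card V ^ 2"
    by (cases "2 \<le> card V") (simp_all add: binomial_le_pow binomial_eq_0)
  finally show ?thesis .
qed

lemma subgraph_induced_edges:
  assumes "simple_graph V E" "A \<subseteq> V"
  shows "subgraph A (induced_edges E A) V E"
  using assms finite_subset by (auto simp: subgraph_def simple_graph_def induced_edges_def)

lemma subgraph_trans:
  "subgraph U C W D \<Longrightarrow> subgraph W D V E \<Longrightarrow> subgraph U C V E"
  by (auto simp: subgraph_def)

lemma edges_split_by_cut:
  assumes "simple_graph V E" "A \<union> B = V"
  shows "E \<subseteq> induced_edges E A \<union> induced_edges E B \<union> cross_edges E A B"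
proof
  fix e assume "e \<in> E"
  with assms obtain x y where "e = {x, y}" "x \<in> A \<union> B" "y \<in> A \<union> B"
    by (auto simp: simple_graph_def card_2_iff)
  with \<open>e \<in> E\<close> show "e \<in> induced_edges E A \<union> induced_edges E B \<union> cross_edges E A B"
    unfolding induced_edges_def cross_edges_def by (auto simp: insert_commute)
qed

lemma card_edges_le_cut:
  assumes "simple_graph V E" "A \<union> B = V"
  shows "card E \<le> card (induced_edges E A) + card (induced_edges E B) + card (cross_edges E A B)"
proof -
  have "finite E"
    using assms(1) finite_subset[of E "Pow V"] by (auto simp: simple_graph_def)
  then have "card E \<le> card (induced_edges E A \<union> induced_edges E B \<union> cross_edges E A B)"
    by (intro card_mono[OF _ edges_split_by_cut[OF assms]])
       (auto simp: induced_edges_def cross_edges_def)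
  also have "\<dots> \<le> card (induced_edges E A) + card (induced_edges E B) + card (cross_edges E A B)"
    by (meson card_Un_le add_right_mono order_trans)
  finally show ?thesis .
qed

lemma quadratic_superadditive:
  fixes \<alpha> \<beta> q a b :: real
  assumes "q \<le> 2 * \<alpha>" "0 \<le> a" "0 \<le> b"
  shows "(\<alpha> * a\<^sup>2 + \<beta> * a) + (\<alpha> * b\<^sup>2 + \<beta> * b) + q * a * b \<le> \<alpha> * (a + b)\<^sup>2 + \<beta> * (a + b)"
proof -
  have "0 \<le> (2 * \<alpha> - q) * (a * b)" using assms by simp
  then show ?thesis by (simp add: power2_eq_square algebra_simps)
qed

lemma cut_dense_subgraph_above_quadratic:
  fixes \<alpha> \<beta> q :: real
  assumes "q \<le> 2 * \<alpha>" and "simple_graph V E"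
    and "\<alpha> * real (card V) ^ 2 + \<beta> * real (card V) < real (card E)"
  shows "\<exists>W D. subgraph W D V E \<and> \<alpha> * real (card W) ^ 2 + \<beta> * real (card W) < real (card D)
           \<and> cut_dense q W D"
  using assms(2,3)
proof (induction "card V" arbitrary: V E rule: less_induct)
  case less
  define bound where "bound k = \<alpha> * real k ^ 2 + \<beta> * real k" for k
  show ?case
  proof (cases "cut_dense q V E")
    case True
    with less.prems show ?thesis by (auto simp: subgraph_def)
  next
    case False
    then obtain A B where AB: "A \<union> B = V" "A \<inter> B = {}"
      and sparse: "real (card (cross_edges E A B)) < q * real (card A) * real (card B)"
      unfolding cut_dense_def by (auto simp: not_le)
    have "finite V" using less.prems(1) by (simp add: simple_graph_def)
    then have card_V: "card V = card A + card B"
      using AB by (metis card_Un_disjoint finite_Un)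
    have "0 < q * real (card A) * real (card B)"
      using sparse of_nat_0_le_iff[of "card (cross_edges E A B)"] by linarith
    then have "card A \<noteq> 0" "card B \<noteq> 0"
      by (metis less_irrefl mult_zero_left mult_zero_right of_nat_0)+
    have "real (card E) < card (induced_edges E A) + card (induced_edges E B) + q * card A * card B"
      using card_edges_le_cut[OF less.prems(1) AB(1)] sparse by linarith
    moreover have "bound (card A) + bound (card B) + q * card A * card B \<le> bound (card V)"
      using quadratic_superadditive[OF assms(1)] card_V by (simp add: bound_def)
    ultimately have "bound (card A) + bound (card B)
        < card (induced_edges E A) + card (induced_edges E B)"
      using less.prems(2) by (simp add: bound_def)
    then have "bound (card A) < card (induced_edges E A) \<or> bound (card B) < card (induced_edges E B)"
      by linarith
    then obtain X where X: "X = A \<or> X = B" and dense: "bound (card X) < card (induced_edges E X)"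
      by blast
    have "X \<subseteq> V" "card X < card V"
      using X AB card_V \<open>card A \<noteq> 0\<close> \<open>card B \<noteq> 0\<close> by auto
    have X_sub: "subgraph X (induced_edges E X) V E"
      using subgraph_induced_edges[OF less.prems(1) \<open>X \<subseteq> V\<close>] .
    then have "simple_graph X (induced_edges E X)" by (simp add: subgraph_def)
    from less.hyps[OF \<open>card X < card V\<close> this dense[unfolded bound_def]]
    obtain W D where "subgraph W D X (induced_edges E X)" "cut_dense q W D"
      "\<alpha> * real (card W) ^ 2 + \<beta> * real (card W) < real (card D)"
      by blast
    with subgraph_trans[OF _ X_sub] show ?thesis by blast
  qed
qed

lemma large_cut_dense_subgraph:
  fixes p q :: real
  assumes "0 < p" "q \<le> p" and G: "simple_graph V E" "card V > 0"
    and dense: "p * real (card V) ^ 2 \<le> real (card E)"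
  shows "\<exists>W D. subgraph W D V E \<and> p / 4 * real (card V) < real (card W) \<and> cut_dense q W D"
proof -
  define n where "n = real (card V)"
  have "p / 2 * n ^ 2 + p * n / 4 * n = 3 / 4 * (p * n ^ 2)"
    by (simp add: power2_eq_square algebra_simps)
  moreover have "0 < p * n ^ 2" "p * n ^ 2 \<le> real (card E)"
    using assms by (simp_all add: n_def)
  ultimately have "p / 2 * n ^ 2 + p * n / 4 * n < real (card E)"
    by linarith
  with cut_dense_subgraph_above_quadratic[of q "p / 2" V E "p * n / 4"] assms(2) G(1)
  obtain W D where W: "subgraph W D V E" "cut_dense q W D"
    and above: "p / 2 * real (card W) ^ 2 + p * n / 4 * real (card W) < real (card D)"
    by (auto simp: n_def)
  have "card D \<le> card W ^ 2"
    using W(1) by (simp add: subgraph_def card_edges_le_square)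
  then have "real (card D) \<le> real (card W) ^ 2"
    by (metis of_nat_le_iff of_nat_power)
  moreover have "0 \<le> p / 2 * real (card W) ^ 2" using assms(1) by simp
  ultimately have "p * n / 4 * real (card W) < real (card W) * real (card W)"
    using above unfolding power2_eq_square by linarith
  then have "p * n / 4 < real (card W)"
    by (meson mult_right_less_imp_less of_nat_0_le_iff)
  with W show ?thesis by (auto simp: n_def)
qed

theorem lemma3p14:
  shows "\<exists>p0>0. \<forall>p. 0 < p \<and> p \<le> p0 \<longrightarrow>
           (\<exists>q0>0. \<forall>q. 0 < q \<and> q \<le> q0 \<longrightarrow>
             (\<exists>\<mu>0>0. \<forall>\<mu>. 0 < \<mu> \<and> \<mu> \<le> \<mu>0 \<longrightarrow>
               (\<exists>n0::nat. \<forall>n \<ge> n0. \<forall>(V::nat set) E.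
                  simple_graph V E \<longrightarrow> card V = n \<longrightarrow>
                  real (card E) \<ge> p * real n ^ 2 \<longrightarrow>
                  (\<exists>W D. subgraph W D V E \<and> real (card W) \<ge> \<mu> * real n \<and>
                         cut_dense q W D))))"
proof -
  have main: "\<exists>W D. subgraph W D V E \<and> \<mu> * real n \<le> real (card W) \<and> cut_dense q W D"
    if "0 < p" "q \<le> p" "\<mu> \<le> p / 4" "1 \<le> n" "simple_graph V E" "card V = n"
      "p * real n ^ 2 \<le> real (card E)"
    for p q \<mu> :: real and n :: nat and V :: "nat set" and E
  proof -
    from that large_cut_dense_subgraph[of p q V E] obtain W D where
      "subgraph W D V E" "p / 4 * real n < real (card W)" "cut_dense q W D"
      by auto
    moreover have "\<mu> * real n \<le> p / 4 * real n" using that(3) by (intro mult_right_mono) auto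
    ultimately show ?thesis by force
  qed
  show ?thesis
    apply (rule exI[of _ 1], intro conjI allI impI, simp)
    apply (rule_tac x = p in exI, intro conjI allI impI, simp)
    apply (rule_tac x = "p / 4" in exI, intro conjI allI impI, simp)
    apply (rule exI[of _ 1], intro allI impI)
    using main by blast
qed

end
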